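(* Let a vertex model on the periodic honeycomb lattice with period $1\times1$ have strictly positive signatures, be realizable, and satisfy Assumption (A). Let the realization produce odd matchgate signatures $(0,\gamma_1,\beta_1,0,\alpha_1,0,0,\delta_1)$ at the white vertex and $(0,\gamma_2,\beta_2,0,\alpha_2,0,0,\delta_2)$ at the black vertex, and set $a=\alpha_1\alpha_2$, $b=\beta_1\beta_2$, $c=\gamma_1\gamma_2$, $d=\delta_1\delta_2$. Then $$(a+b-c-d)(a+c-b-d)(a+d-b-c)>0\qquad\text{and}\qquad a+b+c+d>0.$$
   Context: Signatures are vectors indexed by local configurations $000,001,\dots,111$ of the incident $(a,b,c)$-edges. A realization assigns to each edge an invertible $2\times 2$ matrix $T_e$ (for period $1\times 1$ all edges of a type share one matrix) and to each vertex a matchgate signature $m_v$ with $m_v=(T_a\otimes T_b\otimes T_c)r_v$ at black and $m_v=((T_a\otimes T_b\otimes T_c)^t)^{-1}r_v$ at white vertices, satisfying the parity constraint; after relabelling bases one may assume all matchgates are odd, i.e. $m_v$ vanishes at $000,011,101,110$. Assumption (A): all entries of base change matrices are nonzero and all matchgate signature entries not forced to vanish by parity are nonzero. *)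

theory Defs
  imports "HOL-Analysis.Analysis" "HOL-Library.Complex_Order"
begin

text \<open>Local configurations of the three incident edges (a,b,c) are triples of
  indices of type 2; index 1 stands for bit 0 and index 2 for bit 1, so e.g. the
  configuration 001 is (1,1,2).\<close>

type_synonym sig3 = "2 \<Rightarrow> 2 \<Rightarrow> 2 \<Rightarrow> complex"

definition tensor3 :: "complex^2^2 \<Rightarrow> complex^2^2 \<Rightarrow> complex^2^2 \<Rightarrow> sig3 \<Rightarrow> sig3" where
  "tensor3 A B C r = (\<lambda>x y z. \<Sum>x'\<in>UNIV. \<Sum>y'\<in>UNIV. \<Sum>z'\<in>UNIV.
      A $ x $ x' * B $ y $ y' * C $ z $ z' * r x' y' z')"

definition odd_sig :: "sig3 \<Rightarrow> bool" where
  "odd_sig m \<longleftrightarrow> m 1 1 1 = 0 \<and> m 1 2 2 = 0 \<and> m 2 1 2 = 0 \<and> m 2 2 1 = 0"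

end

theory Submission
  imports Defs
begin

text \<open>
  Pair the white and the black signature over their a- and b-edges. The base changes T_a and
  T_b cancel against their inverse transposes, leaving T_c^t N = K T_c^t, where
  K z w = \<Sum> r_w(x,y,z) r_b(x,y,w) has positive entries and, by parity, N = diag(a+b, c+d).
  So the rows of T_c are eigenvectors of K with eigenvalues a+b and c+d. For a positive 2x2
  matrix both eigenvalues are real with positive sum (the trace), and only the eigenvector of
  the larger one has entries of equal sign. Doing this for all three edges and taking for each
  edge the row with entries of equal sign, the black signature at the resulting configuration
  is a positive combination of the positive values of r_b, hence nonzero; by parity the
  configuration is odd, and this forces a+b-c-d, a+c-b-d, a+d-b-c to have positive product.
  (In the order of Complex_Order, 0 < z means that z is a positive real.)
\<close>

lemma matrix_inv_mult:
  assumes "invertible A"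
  shows "A ** matrix_inv A = mat 1" and "matrix_inv A ** A = mat 1"
  using someI_ex[OF assms[unfolded invertible_def]] unfolding matrix_inv_def by blast+

lemma invertible_transpose:
  fixes A :: "'a::comm_semiring_1^'n^'m"
  shows "invertible A \<Longrightarrow> invertible (transpose A)"
  unfolding invertible_def by (metis matrix_transpose_mul transpose_mat)

lemma transpose_matrix_inv_transpose_mult:
  fixes A :: "'a::comm_semiring_1^'n^'m"
  assumes "invertible A"
  shows "transpose A ** matrix_inv (transpose A) = mat 1"
    and "transpose (matrix_inv (transpose A)) ** A = mat 1"
  using matrix_inv_mult[OF invertible_transpose[OF assms]]
  by (metis matrix_transpose_mul transpose_transpose transpose_mat)+

lemma sum_mult_sum_orthogonal:
  fixes U T :: "'a::comm_semiring_1^'n^'m"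
  assumes "transpose U ** T = mat 1"
  shows "(\<Sum>x\<in>UNIV. (\<Sum>i\<in>UNIV. U$x$i * f i) * (\<Sum>j\<in>UNIV. T$x$j * g j)) = (\<Sum>i\<in>UNIV. f i * g i)"
proof -
  have "(\<Sum>x\<in>UNIV. (\<Sum>i\<in>UNIV. U$x$i * f i) * (\<Sum>j\<in>UNIV. T$x$j * g j))
      = (\<Sum>x\<in>UNIV. \<Sum>i\<in>UNIV. \<Sum>j\<in>UNIV. U$x$i * f i * (T$x$j * g j))"
    by (simp add: sum_product)
  also have "\<dots> = (\<Sum>i\<in>UNIV. \<Sum>x\<in>UNIV. \<Sum>j\<in>UNIV. U$x$i * f i * (T$x$j * g j))"
    by (rule sum.swap)
  also have "\<dots> = (\<Sum>i\<in>UNIV. \<Sum>j\<in>UNIV. \<Sum>x\<in>UNIV. U$x$i * f i * (T$x$j * g j))"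
    by (rule sum.cong[OF refl], rule sum.swap)
  also have "\<dots> = (\<Sum>i\<in>UNIV. \<Sum>j\<in>UNIV. (transpose U ** T)$i$j * (f i * g j))"
    by (simp add: matrix_matrix_mult_def transpose_def sum_distrib_left sum_distrib_right ac_simps)
  also have "\<dots> = (\<Sum>i\<in>UNIV. f i * g i)"
    by (simp add: assms mat_def if_distrib if_distribR sum.delta cong: if_cong)
  finally show ?thesis .
qed

definition contract_ab :: "sig3 \<Rightarrow> sig3 \<Rightarrow> complex^2^2" where
  "contract_ab m m' = (\<chi> z z'. \<Sum>x\<in>UNIV. \<Sum>y\<in>UNIV. m x y z * m' x y z')"

lemma tensor3_nested:
  "tensor3 A B C r x y z =
    (\<Sum>x'\<in>UNIV. A$x$x' * (\<Sum>y'\<in>UNIV. B$y$y' * (\<Sum>z'\<in>UNIV. C$z$z' * r x' y' z')))"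
  by (simp add: tensor3_def sum_distrib_left mult.assoc)

lemma contract_ab_tensor3:
  assumes "transpose UA ** A = mat 1" and "transpose UB ** B = mat 1"
  shows "contract_ab (tensor3 UA UB UC r) (tensor3 A B C s) = UC ** contract_ab r s ** transpose C"
proof (intro vec_eq_iff[THEN iffD2] allI)
  fix z z'
  define R where "R x y = (\<Sum>w\<in>UNIV. UC$z$w * r x y w)" for x y
  define S where "S x y = (\<Sum>w\<in>UNIV. C$z'$w * s x y w)" for x y
  have "contract_ab (tensor3 UA UB UC r) (tensor3 A B C s) $ z $ z'
      = (\<Sum>x\<in>UNIV. \<Sum>y\<in>UNIV. (\<Sum>x'\<in>UNIV. UA$x$x' * (\<Sum>y'\<in>UNIV. UB$y$y' * R x' y'))
                              * (\<Sum>x'\<in>UNIV. A$x$x' * (\<Sum>y'\<in>UNIV. B$y$y' * S x' y')))"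
    by (simp add: contract_ab_def tensor3_nested R_def S_def)
  also have "\<dots> = (\<Sum>y\<in>UNIV. \<Sum>x\<in>UNIV. (\<Sum>x'\<in>UNIV. UA$x$x' * (\<Sum>y'\<in>UNIV. UB$y$y' * R x' y'))
                              * (\<Sum>x'\<in>UNIV. A$x$x' * (\<Sum>y'\<in>UNIV. B$y$y' * S x' y')))"
    by (rule sum.swap)
  also have "\<dots> = (\<Sum>y\<in>UNIV. \<Sum>x\<in>UNIV. (\<Sum>y'\<in>UNIV. UB$y$y' * R x y') * (\<Sum>y'\<in>UNIV. B$y$y' * S x y'))"
    by (simp only: sum_mult_sum_orthogonal[OF assms(1)])
  also have "\<dots> = (\<Sum>x\<in>UNIV. \<Sum>y\<in>UNIV. (\<Sum>y'\<in>UNIV. UB$y$y' * R x y') * (\<Sum>y'\<in>UNIV. B$y$y' * S x y'))"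
    by (rule sum.swap)
  also have "\<dots> = (\<Sum>x\<in>UNIV. \<Sum>y\<in>UNIV. R x y * S x y)"
    by (simp only: sum_mult_sum_orthogonal[OF assms(2)])
  also have "\<dots> = (UC ** contract_ab r s ** transpose C) $ z $ z'"
    by (simp add: R_def S_def contract_ab_def matrix_matrix_mult_def transpose_def sum_2
        algebra_simps)
  finally show "contract_ab (tensor3 UA UB UC r) (tensor3 A B C s) $ z $ z'
      = (UC ** contract_ab r s ** transpose C) $ z $ z'" .
qed

lemma contract_ab_odd:
  assumes "odd_sig m" "odd_sig m'"
  shows "contract_ab m m' $ 1 $ 2 = 0" "contract_ab m m' $ 2 $ 1 = 0"
    and "contract_ab m m' $ 1 $ 1 = m 1 2 1 * m' 1 2 1 + m 2 1 1 * m' 2 1 1"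
    and "contract_ab m m' $ 2 $ 2 = m 1 1 2 * m' 1 1 2 + m 2 2 2 * m' 2 2 2"
  using assms by (simp_all add: contract_ab_def odd_sig_def sum_2)

lemma row_eigenvector_intertwining:
  fixes K C N :: "'a::comm_semiring_1^'n^'n"
  assumes "transpose C ** N = K ** transpose C" and "\<And>i j. i \<noteq> j \<Longrightarrow> N$i$j = 0"
  shows "K *v C$i = N$i$i *s C$i"
proof (rule vec_eq_iff[THEN iffD2, rule_format])
  fix k
  have "(K *v C$i)$k = (K ** transpose C)$k$i"
    by (simp add: matrix_vector_mult_def matrix_matrix_mult_def transpose_def)
  also have "\<dots> = (transpose C ** N)$k$i" by (simp add: assms(1))
  also have "\<dots> = (\<Sum>j\<in>UNIV. C$j$k * N$j$i)"
    by (simp add: matrix_matrix_mult_def transpose_def)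
  also have "\<dots> = (\<Sum>j\<in>UNIV. if j = i then N$i$i * C$i$k else 0)"
    by (rule sum.cong) (auto simp: assms(2) mult.commute)
  finally show "(K *v C$i)$k = (N$i$i *s C$i)$k" by simp
qed

lemma eigenvector_slope_2x2:
  fixes K :: "'a::field^2^2"
  assumes "K *v v = n *s v" and "v$1 \<noteq> 0"
  defines "r \<equiv> v$2 / v$1"
  shows "n = K$1$1 + K$1$2 * r"
    and "K$1$2 * r^2 + (K$1$1 - K$2$2) * r - K$2$1 = 0"
proof -
  have v2: "v$2 = r * v$1" using assms(2) by (simp add: r_def)
  have "(K *v v)$1 = (n *s v)$1" "(K *v v)$2 = (n *s v)$2" using assms(1) by simp_all
  then have e1: "(K$1$1 + K$1$2 * r - n) * v$1 = 0" and e2: "(K$2$1 + K$2$2 * r - n * r) * v$1 = 0"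
    by (simp_all add: matrix_vector_mult_def sum_2 v2 algebra_simps)
  show n: "n = K$1$1 + K$1$2 * r" using e1 assms(2) by simp
  have "K$1$2 * r^2 + (K$1$1 - K$2$2) * r - K$2$1 = - (K$2$1 + K$2$2 * r - n * r)"
    by (simp add: n power2_eq_square algebra_simps)
  also have "\<dots> = 0" using e2 assms(2) by simp
  finally show "K$1$2 * r^2 + (K$1$1 - K$2$2) * r - K$2$1 = 0" .
qed

lemma quadratic_distinct_roots_vieta:
  fixes a b c x y :: "'a::idom"
  assumes "a * x^2 + b * x + c = 0" "a * y^2 + b * y + c = 0" "x \<noteq> y"
  shows "a * (x + y) = - b" and "a * (x * y) = c"
proof -
  have "(x - y) * (a * (x + y) + b) = (a * x^2 + b * x + c) - (a * y^2 + b * y + c)"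
    by (simp add: power2_eq_square algebra_simps)
  then show sum: "a * (x + y) = - b" using assms by (simp add: eq_neg_iff_add_eq_0)
  have "a * (x * y) - c = x * (a * (x + y) + b) - (a * x^2 + b * x + c)"
    by (simp add: power2_eq_square algebra_simps)
  then show "a * (x * y) = c" using assms(1) sum by simp
qed

lemma real_quadratic_root_real:
  fixes z :: complex and a b c :: real
  assumes "of_real a * z^2 + of_real b * z + of_real c = 0" and "a * c < 0"
  shows "z \<in> \<real>"
proof (rule ccontr)
  assume "z \<notin> \<real>"
  then have "Im z \<noteq> 0" by (simp add: complex_is_Real_iff)
  moreover have "Im z * (2 * a * Re z + b) = 0"
    using arg_cong[OF assms(1), of Im] by (simp add: power2_eq_square algebra_simps)
  ultimately have "b = - 2 * a * Re z" by simp
  moreover have "a * (Re z^2 - Im z^2) + b * Re z + c = 0"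
    using arg_cong[OF assms(1), of Re] by (simp add: power2_eq_square algebra_simps)
  ultimately have "c = a * (Re z^2 + Im z^2)" by (simp add: power2_eq_square algebra_simps)
  then have "a * c = a^2 * (Re z^2 + Im z^2)" by (simp add: power2_eq_square)
  moreover have "0 \<le> a^2 * (Re z^2 + Im z^2)" by simp
  ultimately show False using assms(2) by linarith
qed

lemma positive_2x2_eigenvector_slope:
  fixes K :: "complex^2^2"
  assumes K: "\<And>i j. 0 < K$i$j" and eigen: "K *v v = n *s v" and v1: "v$1 \<noteq> 0"
  obtains x where "v$2 / v$1 = of_real x" and "n = of_real (Re (K$1$1) + Re (K$1$2) * x)"
    and "Re (K$1$2) * x^2 + (Re (K$1$1) - Re (K$2$2)) * x - Re (K$2$1) = 0"
proof -
  define r where "r = v$2 / v$1"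
  have Kre: "K$i$j = of_real (Re (K$i$j))" and Re_pos: "0 < Re (K$i$j)" for i j
    using K[of i j] by (simp_all add: less_complex_def complex_eq_iff)
  note ratio = eigenvector_slope_2x2[OF eigen v1, folded r_def]
  have "of_real (Re (K$1$2)) * r^2 + of_real (Re (K$1$1) - Re (K$2$2)) * r
      + of_real (- Re (K$2$1)) = 0"
    using ratio(2) by (subst (asm) (1 2 3 4) Kre) simp
  then have "r \<in> \<real>"
    by (rule real_quadratic_root_real) (simp add: Re_pos mult_pos_neg)
  then obtain x where x: "r = of_real x" by (auto elim: Reals_cases)
  have "of_real (Re (K$1$2) * x^2 + (Re (K$1$1) - Re (K$2$2)) * x - Re (K$2$1)) = (0::complex)"
    using ratio(2) by (subst (asm) (1 2 3 4) Kre) (simp add: x)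
  then have "Re (K$1$2) * x^2 + (Re (K$1$1) - Re (K$2$2)) * x - Re (K$2$1) = 0"
    by (simp only: of_real_eq_0_iff)
  moreover have "n = of_real (Re (K$1$1) + Re (K$1$2) * x)"
    using ratio(1) by (subst (asm) (1 2) Kre) (simp add: x)
  ultimately show ?thesis using that x unfolding r_def by blast
qed

lemma positive_2x2_eigenrows:
  fixes K C :: "complex^2^2"
  assumes K: "\<And>i j. 0 < K$i$j" and C: "\<And>i j. C$i$j \<noteq> 0" "det C \<noteq> 0"
    and eigen: "K *v C$1 = n1 *s C$1" "K *v C$2 = n2 *s C$2"
  shows "0 < n1 + n2"
    and "(0 < C$1$2 / C$1$1 \<and> n2 < n1) \<or> (0 < C$2$2 / C$2$1 \<and> n1 < n2)"
proof -
  define k where "k i j = Re (K$i$j)" for i j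
  have k_pos: "0 < k i j" for i j
    using K[of i j] by (simp add: k_def less_complex_def)
  obtain x1 where x1: "C$1$2 / C$1$1 = of_real x1" "n1 = of_real (k 1 1 + k 1 2 * x1)"
      "k 1 2 * x1^2 + (k 1 1 - k 2 2) * x1 + - k 2 1 = 0"
    using positive_2x2_eigenvector_slope[OF K eigen(1) C(1)] unfolding k_def by auto
  obtain x2 where x2: "C$2$2 / C$2$1 = of_real x2" "n2 = of_real (k 1 1 + k 1 2 * x2)"
      "k 1 2 * x2^2 + (k 1 1 - k 2 2) * x2 + - k 2 1 = 0"
    using positive_2x2_eigenvector_slope[OF K eigen(2) C(1)] unfolding k_def by auto
  have "x1 \<noteq> x2"
  proof
    assume "x1 = x2"
    then have "C$1$2 * C$2$1 = C$2$2 * C$1$1"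
      using x1(1) x2(1) C(1) by (simp add: field_simps)
    then show False using C(2) by (simp add: det_2 mult.commute)
  qed
  \<comment> \<open>The slopes x1, x2 are the two roots of one quadratic, whose product -k21/k12 is negative.\<close>
  note vieta = quadratic_distinct_roots_vieta[OF x1(3) x2(3) this]
  have "k 1 2 * (x1 * x2) < 0" using vieta(2) k_pos[of 2 1] by simp
  then have "x1 * x2 < 0" using k_pos[of 1 2] by (simp add: mult_less_0_iff)
  show "0 < n1 + n2"
    using vieta(1) k_pos[of 1 1] k_pos[of 2 2]
    by (simp add: x1(2) x2(2) less_complex_def algebra_simps)
  show "(0 < C$1$2 / C$1$1 \<and> n2 < n1) \<or> (0 < C$2$2 / C$2$1 \<and> n1 < n2)"
    using \<open>x1 * x2 < 0\<close> k_pos[of 1 2]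
    by (auto simp: x1 x2 less_complex_def mult_less_0_iff)
qed

lemma complex_mult_sign:
  fixes x y :: complex
  shows complex_mult_pos: "0 < x \<Longrightarrow> 0 < y \<Longrightarrow> 0 < x * y"
    and "x < 0 \<Longrightarrow> y < 0 \<Longrightarrow> 0 < x * y"
    and "0 < x \<Longrightarrow> y < 0 \<Longrightarrow> x * y < 0"
    and "x < 0 \<Longrightarrow> 0 < y \<Longrightarrow> x * y < 0"
  by (simp_all add: less_complex_def mult_neg_neg mult_pos_neg mult_neg_pos)

lemma tensor3_nonzero:
  assumes r: "\<And>x y z. 0 < r x y z"
    and ratios: "0 < A$i$2 / A$i$1" "0 < B$j$2 / B$j$1" "0 < C$k$2 / C$k$1"
  shows "tensor3 A B C r i j k \<noteq> 0"
proof -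
  have nz: "A$i$1 \<noteq> 0" "B$j$1 \<noteq> 0" "C$k$1 \<noteq> 0" using ratios by auto
  have pos: "0 < A$i$x / A$i$1" "0 < B$j$x / B$j$1" "0 < C$k$x / C$k$1" for x :: 2
    using ratios nz exhaust_2[of x] by (auto simp: less_complex_def)
  define S where "S = (\<Sum>x\<in>UNIV. \<Sum>y\<in>UNIV. \<Sum>z\<in>UNIV.
      A$i$x / A$i$1 * (B$j$y / B$j$1) * (C$k$z / C$k$1) * r x y z)"
  have "tensor3 A B C r i j k = A$i$1 * B$j$1 * C$k$1 * S"
    unfolding tensor3_def S_def sum_distrib_left using nz by (simp add: field_simps)
  moreover have "0 < S"
    unfolding S_def by (intro sum_pos complex_mult_pos pos r) auto
  ultimately show ?thesis using nz by auto
qed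

definition odd_realization ::
    "complex^2^2 \<Rightarrow> complex^2^2 \<Rightarrow> complex^2^2 \<Rightarrow> sig3 \<Rightarrow> sig3 \<Rightarrow> sig3 \<Rightarrow> sig3 \<Rightarrow> bool" where
  "odd_realization A B C rw rb mw mb \<longleftrightarrow>
     (\<forall>x y z. 0 < rw x y z \<and> 0 < rb x y z) \<and> invertible A \<and> invertible B \<and> invertible C \<and>
     mb = tensor3 A B C rb \<and>
     mw = tensor3 (matrix_inv (transpose A)) (matrix_inv (transpose B))
                  (matrix_inv (transpose C)) rw \<and>
     odd_sig mw \<and> odd_sig mb"

lemma odd_realization_edge_c:
  assumes R: "odd_realization A B C rw rb mw mb" and C_nz: "\<And>i j. C$i$j \<noteq> 0"
  defines "n1 \<equiv> mw 1 2 1 * mb 1 2 1 + mw 2 1 1 * mb 2 1 1"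
    and "n2 \<equiv> mw 1 1 2 * mb 1 1 2 + mw 2 2 2 * mb 2 2 2"
  shows "0 < n1 + n2"
    and "(0 < C$1$2 / C$1$1 \<and> n2 < n1) \<or> (0 < C$2$2 / C$2$1 \<and> n1 < n2)"
proof -
  have pos: "\<And>x y z. 0 < rw x y z" "\<And>x y z. 0 < rb x y z"
    and inv: "invertible C"
    and edges_ab: "transpose (matrix_inv (transpose A)) ** A = mat 1"
                  "transpose (matrix_inv (transpose B)) ** B = mat 1"
    and black: "mb = tensor3 A B C rb"
    and white: "mw = tensor3 (matrix_inv (transpose A)) (matrix_inv (transpose B))
                             (matrix_inv (transpose C)) rw"
    and odd: "odd_sig mw" "odd_sig mb"
    using R by (auto simp: odd_realization_def transpose_matrix_inv_transpose_mult)
  define K where "K = contract_ab rw rb"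
  define N where "N = contract_ab mw mb"
  have K_pos: "0 < K$i$j" for i j
    unfolding K_def contract_ab_def by (auto intro!: sum_pos complex_mult_pos pos)
  have "N = matrix_inv (transpose C) ** K ** transpose C"
    unfolding N_def K_def black white by (rule contract_ab_tensor3[OF edges_ab])
  then have "transpose C ** N = K ** transpose C"
    by (simp add: matrix_mul_assoc transpose_matrix_inv_transpose_mult(1)[OF inv])
  moreover have "N$i$j = 0" if "i \<noteq> j" for i j
    using that odd exhaust_2[of i] exhaust_2[of j] by (auto simp: N_def contract_ab_odd)
  ultimately have eigen: "K *v C$i = N$i$i *s C$i" for i
    by (rule row_eigenvector_intertwining)
  have "N$1$1 = n1" "N$2$2 = n2"
    unfolding N_def n1_def n2_def using odd by (simp_all add: contract_ab_odd)
  moreover have "det C \<noteq> 0" using inv by (simp add: invertible_det_nz)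
  ultimately show "0 < n1 + n2"
    and "(0 < C$1$2 / C$1$1 \<and> n2 < n1) \<or> (0 < C$2$2 / C$2$1 \<and> n1 < n2)"
    using positive_2x2_eigenrows[OF K_pos C_nz _ eigen[of 1] eigen[of 2]] by simp_all
qed

definition rot_sig :: "sig3 \<Rightarrow> sig3" where
  "rot_sig m = (\<lambda>x y z. m y z x)"

lemma rot_sig_tensor3: "rot_sig (tensor3 A B C r) = tensor3 C A B (rot_sig r)"
  by (intro ext) (simp add: tensor3_def rot_sig_def sum_2 algebra_simps)

lemma odd_sig_rot_sig: "odd_sig (rot_sig m) = odd_sig m"
  by (auto simp: odd_sig_def rot_sig_def)

lemma odd_realization_rot_sig:
  assumes "odd_realization A B C rw rb mw mb"
  shows "odd_realization C A B (rot_sig rw) (rot_sig rb) (rot_sig mw) (rot_sig mb)"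
  using assms unfolding odd_realization_def odd_sig_rot_sig
  by (auto simp: rot_sig_tensor3) (simp_all add: rot_sig_def)

theorem lemma4p2:
  fixes Ta Tb Tc :: "complex^2^2"
    and rw rb mw mb :: sig3
  assumes pos_w: "\<And>x y z. rw x y z > 0"
    and pos_b: "\<And>x y z. rb x y z > 0"
    and inv: "invertible Ta" "invertible Tb" "invertible Tc"
    and black: "mb = tensor3 Ta Tb Tc rb"
    and white: "mw = tensor3 (matrix_inv (transpose Ta)) (matrix_inv (transpose Tb))
                              (matrix_inv (transpose Tc)) rw"
    and odd: "odd_sig mw" "odd_sig mb"
    and A_T: "\<And>i j. Ta $ i $ j \<noteq> 0" "\<And>i j. Tb $ i $ j \<noteq> 0" "\<And>i j. Tc $ i $ j \<noteq> 0"
    and A_w: "mw 2 1 1 \<noteq> 0" "mw 1 2 1 \<noteq> 0" "mw 1 1 2 \<noteq> 0" "mw 2 2 2 \<noteq> 0"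
    and A_b: "mb 2 1 1 \<noteq> 0" "mb 1 2 1 \<noteq> 0" "mb 1 1 2 \<noteq> 0" "mb 2 2 2 \<noteq> 0"
  defines "a \<equiv> mw 2 1 1 * mb 2 1 1"
    and "b \<equiv> mw 1 2 1 * mb 1 2 1"
    and "c \<equiv> mw 1 1 2 * mb 1 1 2"
    and "d \<equiv> mw 2 2 2 * mb 2 2 2"
  shows "(a + b - c - d) * (a + c - b - d) * (a + d - b - c) > 0 \<and> a + b + c + d > 0"
proof -
  have R: "odd_realization Ta Tb Tc rw rb mw mb"
    using pos_w pos_b inv black white odd by (simp add: odd_realization_def)
  note edge_c = odd_realization_edge_c[OF R A_T(3)]
  note edge_b = odd_realization_edge_c[OF odd_realization_rot_sig[OF R] A_T(2)]
  note edge_a =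
    odd_realization_edge_c[OF odd_realization_rot_sig[OF odd_realization_rot_sig[OF R]] A_T(1)]
  have sign_a: "(0 < Ta$1$2 / Ta$1$1 \<and> a + d - b - c < 0)
                \<or> (0 < Ta$2$2 / Ta$2$1 \<and> 0 < a + d - b - c)"
   and sign_b: "(0 < Tb$1$2 / Tb$1$1 \<and> 0 < a + c - b - d)
                \<or> (0 < Tb$2$2 / Tb$2$1 \<and> a + c - b - d < 0)"
   and sign_c: "(0 < Tc$1$2 / Tc$1$1 \<and> 0 < a + b - c - d)
                \<or> (0 < Tc$2$2 / Tc$2$1 \<and> a + b - c - d < 0)"
    using edge_a(2) edge_b(2) edge_c(2) unfolding rot_sig_def a_def b_def c_def d_def
    by (simp_all add: less_diff_eq diff_less_eq add_ac)
  have nonzero: "mb i j k \<noteq> 0"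
    if "0 < Ta$i$2 / Ta$i$1" "0 < Tb$j$2 / Tb$j$1" "0 < Tc$k$2 / Tc$k$1" for i j k
    unfolding black using tensor3_nonzero[OF pos_b that] .
  have "mb 1 1 1 = 0" "mb 1 2 2 = 0" "mb 2 1 2 = 0" "mb 2 2 1 = 0"
    using odd(2) by (simp_all add: odd_sig_def)
  then have "(0 < a + b - c - d \<and> 0 < a + c - b - d \<and> 0 < a + d - b - c)
      \<or> (0 < a + b - c - d \<and> a + c - b - d < 0 \<and> a + d - b - c < 0)
      \<or> (a + b - c - d < 0 \<and> 0 < a + c - b - d \<and> a + d - b - c < 0)
      \<or> (a + b - c - d < 0 \<and> a + c - b - d < 0 \<and> 0 < a + d - b - c)"
    using sign_a sign_b sign_c nonzero[of 1 1 1] nonzero[of 1 2 2] nonzero[of 2 1 2]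
      nonzero[of 2 2 1] by blast
  then have "0 < (a + b - c - d) * (a + c - b - d) * (a + d - b - c)"
    by (blast intro: complex_mult_sign)
  moreover have "0 < a + b + c + d"
    using edge_c(1) unfolding a_def b_def c_def d_def by (simp add: add_ac)
  ultimately show ?thesis by blast
qed

end
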